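(* If an atomic flow $B$ is cycle-free and $B\to_{\mathsf{se}}C$, then $C$ is cycle-free.
   Context: An atomic flow is a tuple $(V,E,\eta,up,lo)$: finite sets of vertices and edges, a labelling of vertices by interaction, cut, weakening, coweakening, contraction or cocontraction, and maps $up:E\to V\cup\{\top\}$, $lo:E\to V\cup\{\bot\}$. Upper edges of $\nu$: $lo(\epsilon)=\nu$; lower edges: $up(\epsilon)=\nu$. (Upper, lower) edge numbers: $(0,2)$ interaction, $(2,0)$ cut, $(0,1)$ weakening, $(1,0)$ coweakening, $(2,1)$ contraction, $(1,2)$ cocontraction; no directed cycles; there is $\pi:E\to\{+,-\}$ giving all edges of a (co)contraction the same sign and the two edges of an interaction/cut different signs. Edges with $up=\top$ are the upper edges of the flow, edges with $lo=\bot$ its lower edges. A path from $\nu$ to $\nu'$ is a sequence of edges $\epsilon_1,\dots,\epsilon_h$ with $lo(\epsilon_i)=up(\epsilon_{i+1})$, $up(\epsilon_1)=\nu$, $lo(\epsilon_h)=\nu'$; its reversal is a path from $\nu'$ to $\nu$. An $\mathsf{ai}$-path from $\nu$ to $\nu'$ is either a path from $\nu$ to $\nu'$ or a sequence $\epsilon_1,\dots,\epsilon_k,\epsilon_{k+1},\dots,\epsilon_h$ with $\epsilon_k\neq\epsilon_{k+1}$ such that, for some interaction or cut vertex $\nu''$, $\epsilon_1,\dots,\epsilon_k$ is an $\mathsf{ai}$-path from $\nu$ to $\nu''$ and $\epsilon_{k+1},\dots,\epsilon_h$ is an $\mathsf{ai}$-path from $\nu''$ to $\nu'$. An $\mathsf{ai}$-cycle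 is an $\mathsf{ai}$-path from a vertex to itself in which no edge appears twice; a flow is cycle-free if it has none. A simple edge is an edge from an interaction vertex to a cut vertex. Reduction $\to_{\mathsf{se}}$: let $B$ contain a simple edge $\epsilon$ from interaction $\iota$ to cut $\kappa$; let $\epsilon_2$ be the other lower edge of $\iota$ and $\epsilon_3$ the other upper edge of $\kappa$. Let $A$ be obtained from $B$ by deleting $\iota$, $\kappa$ and $\epsilon$, so that $\epsilon_2$ becomes an upper edge and $\epsilon_3$ a lower edge of $A$; let $\epsilon_1,\dots,\epsilon_h$ be the remaining upper edges and $\epsilon'_1,\dots,\epsilon'_k$ the remaining lower edges of $A$ ($h,k\ge0$). Take two disjoint copies $\tilde A$, $\hat A$ of $A$ (copies of edges marked with tildes and hats). Then $B\to_{\mathsf{se}}C$ where $C$ is formed as follows: $\tilde\epsilon_2$ becomes the lower edge of a new weakening vertex; $\hat\epsilon_3$ becomes the upper edge of a new coweakening vertex; $\tilde\epsilon_3$ and $\hat\epsilon_2$ are identified into a single edge (from the upper endpoint of $\tilde\epsilon_3$ in $\tilde A$ to the lower endpoint of $\hat\epsilon_2$ in $\hat A$); for each $i\le h$ a new cocontraction vertex has upper edge $\epsilon_i$ (an upper edge of $C$) and lower edges $\tilde\epsilon_i,\hat\epsilon_i$; for each $j\le k$ a new contraction vertex has upper edges $\tilde\epsilon'_j,\hat\epsilon'_j$ and lower edge $\epsilon'_j$ (a lower edge of $C$). *)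

theory Defs
  imports Main
begin

datatype vkind = Interaction | Cut | Weakening | Coweakening | Contraction | Cocontraction

fun upper_num :: "vkind \<Rightarrow> nat" where
  "upper_num Interaction = 0" | "upper_num Cut = 2" | "upper_num Weakening = 0"
| "upper_num Coweakening = 1" | "upper_num Contraction = 2" | "upper_num Cocontraction = 1"

fun lower_num :: "vkind \<Rightarrow> nat" where
  "lower_num Interaction = 2" | "lower_num Cut = 0" | "lower_num Weakening = 1"
| "lower_num Coweakening = 0" | "lower_num Contraction = 1" | "lower_num Cocontraction = 2"

text \<open>A flow: vertices, edges, labelling, and maps up/lo.  The value None of
  fup stands for top, the value None of flo stands for bottom.\<close>
record ('v, 'e) flow =
  fverts :: "'v set"
  fedges :: "'e set"
  flab :: "'v \<Rightarrow> vkind"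
  fup :: "'e \<Rightarrow> 'v option"
  flo :: "'e \<Rightarrow> 'v option"

definition dpath :: "('v, 'e) flow \<Rightarrow> 'v \<Rightarrow> 'v \<Rightarrow> 'e list \<Rightarrow> bool" where
  "dpath F v v' es \<longleftrightarrow> es \<noteq> [] \<and> set es \<subseteq> fedges F
     \<and> fup F (hd es) = Some v \<and> flo F (last es) = Some v'
     \<and> (\<forall>i. Suc i < length es \<longrightarrow> flo F (es ! i) \<noteq> None \<and> flo F (es ! i) = fup F (es ! Suc i))"

definition fpath :: "('v, 'e) flow \<Rightarrow> 'v \<Rightarrow> 'v \<Rightarrow> 'e list \<Rightarrow> bool" where
  "fpath F v v' es \<longleftrightarrow> dpath F v v' es \<or> dpath F v' v (rev es)"

definition atomic_flow :: "('v, 'e) flow \<Rightarrow> bool" where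
  "atomic_flow F \<longleftrightarrow>
     finite (fverts F) \<and> finite (fedges F)
     \<and> (\<forall>e\<in>fedges F. (\<forall>v. fup F e = Some v \<longrightarrow> v \<in> fverts F) \<and> (\<forall>v. flo F e = Some v \<longrightarrow> v \<in> fverts F))
     \<and> (\<forall>v\<in>fverts F. card {e\<in>fedges F. flo F e = Some v} = upper_num (flab F v)
                     \<and> card {e\<in>fedges F. fup F e = Some v} = lower_num (flab F v))
     \<and> \<not> (\<exists>v es. dpath F v v es)
     \<and> (\<exists>\<pi> :: 'e \<Rightarrow> bool. \<forall>v\<in>fverts F. \<forall>e\<in>fedges F. \<forall>e'\<in>fedges F.
          (fup F e = Some v \<or> flo F e = Some v) \<longrightarrow> (fup F e' = Some v \<or> flo F e' = Some v) \<longrightarrow>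
          (flab F v \<in> {Contraction, Cocontraction} \<longrightarrow> \<pi> e = \<pi> e')
          \<and> (flab F v \<in> {Interaction, Cut} \<longrightarrow> e \<noteq> e' \<longrightarrow> \<pi> e \<noteq> \<pi> e'))"

inductive ai_path :: "('v, 'e) flow \<Rightarrow> 'v \<Rightarrow> 'v \<Rightarrow> 'e list \<Rightarrow> bool" for F where
  ai_base: "fpath F v v' es \<Longrightarrow> ai_path F v v' es"
| ai_join: "ai_path F v w xs \<Longrightarrow> ai_path F w v' ys \<Longrightarrow> w \<in> fverts F
            \<Longrightarrow> flab F w \<in> {Interaction, Cut} \<Longrightarrow> last xs \<noteq> hd ys
            \<Longrightarrow> ai_path F v v' (xs @ ys)"

definition cycle_free :: "('v, 'e) flow \<Rightarrow> bool" where
  "cycle_free F \<longleftrightarrow> \<not> (\<exists>v es. v \<in> fverts F \<and> ai_path F v v es \<and> distinct es)"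

text \<open>Vertices of C: tilde / hat copies of vertices of A, the new weakening and
  coweakening, and the new cocontractions / contractions indexed by the upper /
  lower edges of A they serve.\<close>
datatype ('v, 'e) se_vertex = TlV 'v | HtV 'v | NewW | NewCW | CoConV 'e | ConV 'e

text \<open>Edges of C: tilde / hat copies of edges of A (tilde eps3 and hat eps2 are
  merged into Mid), the upper edges OutU e of C (above the cocontraction for e) and
  the lower edges OutL e of C (below the contraction for e).\<close>
datatype 'e se_edge = TlE 'e | HtE 'e | Mid | OutU 'e | OutL 'e

definition se_result ::
  "('v, 'e) flow \<Rightarrow> 'v \<Rightarrow> 'v \<Rightarrow> 'e \<Rightarrow> 'e \<Rightarrow> 'e \<Rightarrow> (('v, 'e) se_vertex, 'e se_edge) flow" where
  "se_result B \<iota> \<kappa> \<epsilon> \<epsilon>2 \<epsilon>3 =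
    (let VA = fverts B - {\<iota>, \<kappa>};
         EA = fedges B - {\<epsilon>};
         upA = (\<lambda>e. if e = \<epsilon>2 then None else fup B e);
         loA = (\<lambda>e. if e = \<epsilon>3 then None else flo B e);
         UA = {e\<in>EA. upA e = None} - {\<epsilon>2};
         LA = {e\<in>EA. loA e = None} - {\<epsilon>3};
         tup = (\<lambda>e. case upA e of Some v \<Rightarrow> Some (TlV v)
                     | None \<Rightarrow> if e = \<epsilon>2 then Some NewW else Some (CoConV e));
         tlo = (\<lambda>e. case loA e of Some v \<Rightarrow> Some (TlV v) | None \<Rightarrow> Some (ConV e));
         hup = (\<lambda>e. case upA e of Some v \<Rightarrow> Some (HtV v) | None \<Rightarrow> Some (CoConV e));
         hlo = (\<lambda>e. case loA e of Some v \<Rightarrow> Some (HtV v)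
                     | None \<Rightarrow> if e = \<epsilon>3 then Some NewCW else Some (ConV e))
     in \<lparr> fverts = TlV ` VA \<union> HtV ` VA \<union> {NewW, NewCW} \<union> CoConV ` UA \<union> ConV ` LA,
          fedges = TlE ` (EA - {\<epsilon>3}) \<union> HtE ` (EA - {\<epsilon>2}) \<union> {Mid} \<union> OutU ` UA \<union> OutL ` LA,
          flab = (\<lambda>x. case x of TlV v \<Rightarrow> flab B v | HtV v \<Rightarrow> flab B v
                     | NewW \<Rightarrow> Weakening | NewCW \<Rightarrow> Coweakening
                     | CoConV _ \<Rightarrow> Cocontraction | ConV _ \<Rightarrow> Contraction),
          fup = (\<lambda>x. case x of TlE e \<Rightarrow> tup e | HtE e \<Rightarrow> hup e | Mid \<Rightarrow> tup \<epsilon>3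
                     | OutU e \<Rightarrow> None | OutL e \<Rightarrow> Some (ConV e)),
          flo = (\<lambda>x. case x of TlE e \<Rightarrow> tlo e | HtE e \<Rightarrow> hlo e | Mid \<Rightarrow> hlo \<epsilon>2
                     | OutU e \<Rightarrow> Some (CoConV e) | OutL e \<Rightarrow> None) \<rparr>)"

definition se_step :: "('v, 'e) flow \<Rightarrow> (('v, 'e) se_vertex, 'e se_edge) flow \<Rightarrow> bool" where
  "se_step B C \<longleftrightarrow> (\<exists>\<iota> \<kappa> \<epsilon> \<epsilon>2 \<epsilon>3.
      \<iota> \<in> fverts B \<and> \<kappa> \<in> fverts B \<and> flab B \<iota> = Interaction \<and> flab B \<kappa> = Cut
      \<and> \<epsilon> \<in> fedges B \<and> fup B \<epsilon> = Some \<iota> \<and> flo B \<epsilon> = Some \<kappa>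
      \<and> \<epsilon>2 \<in> fedges B \<and> \<epsilon>2 \<noteq> \<epsilon> \<and> fup B \<epsilon>2 = Some \<iota>
      \<and> \<epsilon>3 \<in> fedges B \<and> \<epsilon>3 \<noteq> \<epsilon> \<and> flo B \<epsilon>3 = Some \<kappa>
      \<and> C = se_result B \<iota> \<kappa> \<epsilon> \<epsilon>2 \<epsilon>3)"

end

theory Submission
  imports Defs
begin

text \<open>A cycle of the reduct is pushed down to a cycle of \<open>B\<close>. Ai-paths are recorded as walks,
  sequences of edge traversals whose direction reverses only at an interaction or a cut, through a
  different edge. Copies of vertices project to their originals, the new weakening and
  coweakening to \<open>\<iota>\<close> and \<open>\<kappa>\<close>, copies of edges to their originals, the merged edge to the path
  \<open>\<epsilon>3, \<epsilon>, \<epsilon>2\<close> through \<open>\<kappa>\<close> and \<open>\<iota>\<close>; under this projection walks of the reduct become walks of \<open>B\<close>.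
  No walk passes through a new (co)contraction, and a closed walk based at one leaves and
  returns along the tilde and hat copies of one edge, hence through the two copies of one
  vertex of \<open>B\<close>: the walk between them still projects to a closed walk. Finally a closed walk of
  \<open>B\<close> can be shortened until no edge repeats, which gives an ai-cycle.\<close>

section \<open>Walks\<close>

text \<open>\<open>(e, True)\<close> traverses \<open>e\<close> downwards, from \<open>up e\<close> to \<open>lo e\<close>; \<open>(e, False)\<close> upwards.\<close>
definition traverses :: "('v, 'e) flow \<Rightarrow> 'e \<times> bool \<Rightarrow> 'v \<Rightarrow> 'v \<Rightarrow> bool" where
  "traverses F x a b \<longleftrightarrow> fst x \<in> fedges F \<and>
     (if snd x then fup F (fst x) = Some a \<and> flo F (fst x) = Some b
      else flo F (fst x) = Some a \<and> fup F (fst x) = Some b)"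

definition may_follow :: "('v, 'e) flow \<Rightarrow> 'v \<Rightarrow> 'e \<times> bool \<Rightarrow> 'e \<times> bool \<Rightarrow> bool" where
  "may_follow F c x y \<longleftrightarrow> snd x = snd y \<or> (flab F c \<in> {Interaction, Cut} \<and> fst x \<noteq> fst y)"

fun walk :: "('v, 'e) flow \<Rightarrow> 'v \<Rightarrow> 'v \<Rightarrow> ('e \<times> bool) list \<Rightarrow> bool" where
  "walk F a b [] = False"
| "walk F a b [x] = traverses F x a b"
| "walk F a b (x # y # ws) = (\<exists>c. traverses F x a c \<and> may_follow F c x y \<and> walk F c b (y # ws))"

definition edges_attached :: "('v, 'e) flow \<Rightarrow> bool" where
  "edges_attached F \<longleftrightarrow>
     (\<forall>e\<in>fedges F. \<forall>v. fup F e = Some v \<or> flo F e = Some v \<longrightarrow> v \<in> fverts F)"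

lemma atomic_flow_edges_attached: "atomic_flow F \<Longrightarrow> edges_attached F"
  by (auto simp: atomic_flow_def edges_attached_def)

lemma traverses_in_fverts:
  "edges_attached F \<Longrightarrow> traverses F x a b \<Longrightarrow> a \<in> fverts F \<and> b \<in> fverts F"
  by (auto simp: edges_attached_def traverses_def split: if_splits)

lemma traverses_unique: "traverses F x a b \<Longrightarrow> traverses F x a' b' \<Longrightarrow> a = a' \<and> b = b'"
  by (auto simp: traverses_def split: if_splits)

lemma traverses_opposite:
  "traverses F (e, d) a b \<Longrightarrow> traverses F (e, \<not> d) a' b' \<Longrightarrow> a = b' \<and> b = a'"
  by (auto simp: traverses_def split: if_splits)

lemma traverses_apsnd_Not [simp]: "traverses F (apsnd Not x) b a \<longleftrightarrow> traverses F x a b"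
  by (auto simp: traverses_def)

lemma may_follow_apsnd_Not: "may_follow F c x y \<Longrightarrow> may_follow F c (apsnd Not y) (apsnd Not x)"
  by (auto simp: may_follow_def)

lemma walk_Cons:
  "ws \<noteq> [] \<Longrightarrow> walk F a b (x # ws) \<longleftrightarrow>
     (\<exists>c. traverses F x a c \<and> may_follow F c x (hd ws) \<and> walk F c b ws)"
  by (cases ws) auto

lemma walk_append_iff:
  assumes "xs \<noteq> []" and "ys \<noteq> []"
  shows "walk F a b (xs @ ys) \<longleftrightarrow>
           (\<exists>c. walk F a c xs \<and> may_follow F c (last xs) (hd ys) \<and> walk F c b ys)"
  using assms(1)
proof (induction xs arbitrary: a rule: list_nonempty_induct)
  case (single x)
  show ?case using assms(2) by (simp add: walk_Cons)
next
  case (cons x xs)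
  then show ?case by (auto simp: walk_Cons)
qed

lemma walk_hd_traverses: "walk F a b (x # ws) \<Longrightarrow> \<exists>c. traverses F x a c"
  by (cases ws) auto

lemma walk_last_traverses: "walk F a b ws \<Longrightarrow> \<exists>c. traverses F (last ws) c b"
  by (induction F a b ws rule: walk.induct) auto

lemma walk_rev: "walk F a b ws \<Longrightarrow> walk F b a (rev (map (apsnd Not) ws))"
proof (induction F a b ws rule: walk.induct)
  case (3 F a b x y ws)
  then obtain c where "traverses F x a c" "may_follow F c x y" "walk F c b (y # ws)"
    by auto
  moreover have "walk F b c (rev (map (apsnd Not) (y # ws)))"
    using 3 \<open>walk F c b (y # ws)\<close> by blast
  ultimately show ?case
    using walk_append_iff[of "rev (map (apsnd Not) (y # ws))" "[apsnd Not x]" F b a]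
    by (auto intro: may_follow_apsnd_Not)
qed auto

lemma dpath_Cons_iff:
  "dpath F a b (e # es) \<longleftrightarrow> e \<in> fedges F \<and> fup F e = Some a \<and>
     (if es = [] then flo F e = Some b else \<exists>c. flo F e = Some c \<and> dpath F c b es)"
proof (cases es)
  case (Cons e' es')
  have "(\<forall>i. Suc i < length (e # es) \<longrightarrow> flo F ((e # es) ! i) \<noteq> None
              \<and> flo F ((e # es) ! i) = fup F ((e # es) ! Suc i)) \<longleftrightarrow>
        flo F e \<noteq> None \<and> flo F e = fup F e' \<and>
        (\<forall>i. Suc i < length es \<longrightarrow> flo F (es ! i) \<noteq> None \<and> flo F (es ! i) = fup F (es ! Suc i))"
    unfolding Cons
    by (simp only: length_Cons Suc_less_eq All_less_Suc2 nth_Cons_0 nth_Cons_Suc conj_assoc)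
  then show ?thesis
    using Cons by (auto simp: dpath_def)
qed (auto simp: dpath_def)

lemma dpath_iff_walk_down: "dpath F a b es \<longleftrightarrow> walk F a b (map (\<lambda>e. (e, True)) es)"
proof (induction es arbitrary: a)
  case (Cons e es)
  then show ?case
    by (cases "es = []") (auto simp: dpath_Cons_iff walk_Cons traverses_def may_follow_def hd_map)
qed (simp add: dpath_def)

lemma walk_monotone_fpath:
  assumes "walk F a b ws" and "\<forall>x\<in>set ws. snd x = d"
  shows "fpath F a b (map fst ws)"
proof (cases d)
  case True
  then have "ws = map (\<lambda>e. (e, True)) (map fst ws)"
    using assms(2) by (induction ws) auto
  then show ?thesis
    using assms(1) by (metis dpath_iff_walk_down fpath_def)
next
  case False
  then have "rev (map (apsnd Not) ws) = map (\<lambda>e. (e, True)) (rev (map fst ws))"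
    using assms(2) by (induction ws) auto
  then show ?thesis
    using walk_rev[OF assms(1)] by (metis dpath_iff_walk_down fpath_def)
qed

lemma ai_path_imp_walk: "ai_path F a b es \<Longrightarrow> \<exists>ws. walk F a b ws \<and> map fst ws = es"
proof (induction rule: ai_path.induct)
  case (ai_base v v' es)
  show ?case
  proof (cases "dpath F v v' es")
    case True
    then show ?thesis
      by (intro exI[of _ "map (\<lambda>e. (e, True)) es"]) (simp add: dpath_iff_walk_down comp_def)
  next
    case False
    with ai_base have "walk F v' v (map (\<lambda>e. (e, True)) (rev es))"
      by (simp add: fpath_def dpath_iff_walk_down)
    from walk_rev[OF this] show ?thesis
      by (intro exI[of _ "rev (map (apsnd Not) (map (\<lambda>e. (e, True)) (rev es)))"])
        (simp add: rev_map comp_def)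
  qed
next
  case (ai_join v w xs v' ys)
  then obtain wx wy where "walk F v w wx" "map fst wx = xs" "walk F w v' wy" "map fst wy = ys"
    by blast
  moreover have "wx \<noteq> []" "wy \<noteq> []"
    using calculation by auto
  ultimately show ?case
    using ai_join.hyps
    by (intro exI[of _ "wx @ wy"]) (auto simp: walk_append_iff may_follow_def last_map hd_map)
qed

text \<open>Split a walk after its maximal monotone prefix; the walk turns at the split point,
  which is therefore an interaction or cut.\<close>
lemma walk_imp_ai_path:
  assumes "edges_attached F"
  shows "walk F a b ws \<Longrightarrow> ai_path F a b (map fst ws)"
proof (induction "length ws" arbitrary: a ws rule: less_induct)
  case less
  define d where "d = snd (hd ws)"
  define seg rest
    where "seg = takeWhile (\<lambda>x. snd x = d) ws" and "rest = dropWhile (\<lambda>x. snd x = d) ws"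
  have ws: "ws = seg @ rest"
    by (simp add: seg_def rest_def)
  have "seg \<noteq> []"
    using less.prems by (cases ws) (simp_all add: seg_def d_def)
  have seg_dir: "\<forall>x\<in>set seg. snd x = d"
    by (auto simp: seg_def dest: set_takeWhileD)
  show ?case
  proof (cases "rest = []")
    case True
    then show ?thesis
      using less.prems ws seg_dir by (auto intro: ai_base walk_monotone_fpath)
  next
    case False
    then obtain c where seg_walk: "walk F a c seg" and turn: "may_follow F c (last seg) (hd rest)"
      and rest_walk: "walk F c b rest"
      using less.prems \<open>seg \<noteq> []\<close> ws walk_append_iff by metis
    have "snd (hd rest) \<noteq> d"
      using False unfolding rest_def by (rule hd_dropWhile)
    moreover have "snd (last seg) = d"
      using seg_dir \<open>seg \<noteq> []\<close> by simp
    ultimately have "flab F c \<in> {Interaction, Cut}" "fst (last seg) \<noteq> fst (hd rest)"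
      using turn by (auto simp: may_follow_def)
    moreover have "c \<in> fverts F"
      using rest_walk False assms walk_hd_traverses traverses_in_fverts
      by (metis list.collapse)
    moreover have "ai_path F c b (map fst rest)"
      using less.hyps rest_walk ws \<open>seg \<noteq> []\<close> by simp
    ultimately have "ai_path F a b (map fst seg @ map fst rest)"
      using ai_base[OF walk_monotone_fpath[OF seg_walk seg_dir]] \<open>seg \<noteq> []\<close> False
      by (intro ai_join) (auto simp: last_map hd_map)
    then show ?thesis
      using ws by simp
  qed
qed

lemma not_distinct_map_decomp:
  "\<not> distinct (map f xs) \<Longrightarrow> \<exists>ys x zs y us. xs = ys @ (x # zs @ [y]) @ us \<and> f x = f y"
proof (induction xs)
  case (Cons x xs)
  show ?case
  proof (cases "distinct (map f xs)")
    case True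
    with Cons.prems obtain y where "y \<in> set xs" "f x = f y"
      by auto
    moreover from \<open>y \<in> set xs\<close> obtain zs us where "xs = zs @ y # us"
      by (meson split_list)
    ultimately show ?thesis
      by (intro exI[of _ "[]"] exI[of _ x] exI[of _ zs] exI[of _ y] exI[of _ us]) simp
  next
    case False
    then obtain ys x' zs y us where "xs = ys @ (x' # zs @ [y]) @ us \<and> f x' = f y"
      using Cons.IH by blast
    then show ?thesis
      by (intro exI[of _ "x # ys"]) auto
  qed
qed simp

lemma walk_infix:
  assumes w: "walk F a b (p @ s @ r)" and "s \<noteq> []"
  shows "\<exists>c d. walk F c d s"
proof -
  have "\<exists>c. walk F c b (s @ r)"
  proof (cases "p = []")
    case False
    then show ?thesis
      using w walk_append_iff[OF False, of "s @ r" F a b] \<open>s \<noteq> []\<close> by blast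
  qed (use w in auto)
  then obtain c where sr: "walk F c b (s @ r)" ..
  show ?thesis
  proof (cases "r = []")
    case False
    then show ?thesis
      using sr walk_append_iff[OF \<open>s \<noteq> []\<close> False, of F c b] by blast
  qed (use sr in auto)
qed

text \<open>The closed walk is the part before the second traversal if both traversals run in the same
  direction, and the part strictly between them otherwise (a U-turn on one edge is no walk).\<close>
lemma walk_same_edge_ends_closed:
  assumes w: "walk F c d (x1 # q @ [x2])" and same: "fst x1 = fst x2"
  shows "\<exists>a ws. walk F a a ws \<and> length ws \<le> Suc (length q)"
proof -
  obtain c1 where t1: "traverses F x1 c c1" and turn: "may_follow F c1 x1 (hd (q @ [x2]))"
    and w1: "walk F c1 d (q @ [x2])"
    using w walk_Cons[of "q @ [x2]" F c d x1] by blast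
  obtain c2 where t2: "traverses F x2 c2 d" and mid: "if q = [] then c2 = c1 else walk F c1 c2 q"
  proof (cases "q = []")
    case False
    then show ?thesis
      using that w1 walk_append_iff[OF False, of "[x2]" F c1 d] by auto
  qed (use that w1 in auto)
  show ?thesis
  proof (cases "snd x1 = snd x2")
    case True
    then have "x1 = x2"
      using same by (simp add: prod_eq_iff)
    then have "c = c2"
      using t1 t2 traverses_unique by metis
    then have "walk F c c (x1 # q)"
      using t1 turn mid by (cases "q = []") (auto simp: walk_Cons)
    then show ?thesis
      by (metis length_Cons order_refl)
  next
    case False
    then have "x2 = (fst x1, \<not> snd x1)"
      using same by (simp add: prod_eq_iff)
    then have "c1 = c2"
      using t1 t2 traverses_opposite[of F "fst x1" "snd x1"] by simp
    moreover have "q \<noteq> []"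
      using turn False same by (auto simp: may_follow_def)
    ultimately have "walk F c2 c2 q"
      using mid by simp
    then show ?thesis
      using le_SucI by blast
  qed
qed

lemma walk_closed_distinct:
  "walk F a a ws \<Longrightarrow> \<exists>c ws'. walk F c c ws' \<and> distinct (map fst ws')"
proof (induction "length ws" arbitrary: a ws rule: less_induct)
  case less
  show ?case
  proof (cases "distinct (map fst ws)")
    case False
    then obtain p x1 q x2 r where ws: "ws = p @ (x1 # q @ [x2]) @ r" and "fst x1 = fst x2"
      using not_distinct_map_decomp by blast
    obtain c d where "walk F c d (x1 # q @ [x2])"
      using walk_infix[OF less.prems[unfolded ws]] by blast
    from walk_same_edge_ends_closed[OF this \<open>fst x1 = fst x2\<close>]
    obtain b ws' where "walk F b b ws'" and "length ws' \<le> Suc (length q)"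
      by blast
    moreover have "length ws' < length ws"
      using \<open>length ws' \<le> Suc (length q)\<close> ws by simp
    ultimately show ?thesis
      using less.hyps by blast
  qed (use less.prems in blast)
qed

lemma cycle_free_no_closed_walk:
  assumes "edges_attached F" and "cycle_free F"
  shows "\<not> walk F a a ws"
proof
  assume "walk F a a ws"
  from walk_closed_distinct[OF this]
  obtain c ws' where w: "walk F c c ws'" and dist: "distinct (map fst ws')"
    by blast
  obtain x ws'' where "walk F c c (x # ws'')"
    using w by (cases ws') auto
  then obtain d where "traverses F x c d"
    using walk_hd_traverses by metis
  then have "c \<in> fverts F"
    using traverses_in_fverts[OF assms(1)] by blast
  with walk_imp_ai_path[OF assms(1) w] dist assms(2) show False
    unfolding cycle_free_def by blast
qed

section \<open>Projecting the reduct onto the original flow\<close>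

lemma se_fedges:
  "TlE x \<in> fedges (se_result B \<iota> \<kappa> \<epsilon> \<epsilon>2 \<epsilon>3) \<longleftrightarrow> x \<in> fedges B \<and> x \<noteq> \<epsilon> \<and> x \<noteq> \<epsilon>3"
  "HtE x \<in> fedges (se_result B \<iota> \<kappa> \<epsilon> \<epsilon>2 \<epsilon>3) \<longleftrightarrow> x \<in> fedges B \<and> x \<noteq> \<epsilon> \<and> x \<noteq> \<epsilon>2"
  "Mid \<in> fedges (se_result B \<iota> \<kappa> \<epsilon> \<epsilon>2 \<epsilon>3)"
  by (auto simp: se_result_def Let_def)

lemma se_fup:
  "fup (se_result B \<iota> \<kappa> \<epsilon> \<epsilon>2 \<epsilon>3) (TlE x) =
     (if x = \<epsilon>2 then Some NewW
      else case fup B x of Some v \<Rightarrow> Some (TlV v) | None \<Rightarrow> Some (CoConV x))"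
  "fup (se_result B \<iota> \<kappa> \<epsilon> \<epsilon>2 \<epsilon>3) (HtE x) =
     (if x = \<epsilon>2 then Some (CoConV x)
      else case fup B x of Some v \<Rightarrow> Some (HtV v) | None \<Rightarrow> Some (CoConV x))"
  "fup (se_result B \<iota> \<kappa> \<epsilon> \<epsilon>2 \<epsilon>3) Mid =
     (if \<epsilon>3 = \<epsilon>2 then Some NewW
      else case fup B \<epsilon>3 of Some v \<Rightarrow> Some (TlV v) | None \<Rightarrow> Some (CoConV \<epsilon>3))"
  "fup (se_result B \<iota> \<kappa> \<epsilon> \<epsilon>2 \<epsilon>3) (OutU x) = None"
  "fup (se_result B \<iota> \<kappa> \<epsilon> \<epsilon>2 \<epsilon>3) (OutL x) = Some (ConV x)"
  by (auto simp: se_result_def Let_def split: option.splits)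

lemma se_flo:
  "flo (se_result B \<iota> \<kappa> \<epsilon> \<epsilon>2 \<epsilon>3) (TlE x) =
     (if x = \<epsilon>3 then Some (ConV x)
      else case flo B x of Some v \<Rightarrow> Some (TlV v) | None \<Rightarrow> Some (ConV x))"
  "flo (se_result B \<iota> \<kappa> \<epsilon> \<epsilon>2 \<epsilon>3) (HtE x) =
     (if x = \<epsilon>3 then Some NewCW
      else case flo B x of Some v \<Rightarrow> Some (HtV v) | None \<Rightarrow> Some (ConV x))"
  "flo (se_result B \<iota> \<kappa> \<epsilon> \<epsilon>2 \<epsilon>3) Mid =
     (if \<epsilon>2 = \<epsilon>3 then Some NewCW
      else case flo B \<epsilon>2 of Some v \<Rightarrow> Some (HtV v) | None \<Rightarrow> Some (ConV \<epsilon>2))"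
  "flo (se_result B \<iota> \<kappa> \<epsilon> \<epsilon>2 \<epsilon>3) (OutU x) = Some (CoConV x)"
  "flo (se_result B \<iota> \<kappa> \<epsilon> \<epsilon>2 \<epsilon>3) (OutL x) = None"
  by (auto simp: se_result_def Let_def split: option.splits)

lemma se_flab:
  "flab (se_result B \<iota> \<kappa> \<epsilon> \<epsilon>2 \<epsilon>3) v =
     (case v of TlV u \<Rightarrow> flab B u | HtV u \<Rightarrow> flab B u | NewW \<Rightarrow> Weakening | NewCW \<Rightarrow> Coweakening
      | CoConV _ \<Rightarrow> Cocontraction | ConV _ \<Rightarrow> Contraction)"
  by (simp add: se_result_def Let_def)

lemma se_new_vertex_edges:
  "flo (se_result B \<iota> \<kappa> \<epsilon> \<epsilon>2 \<epsilon>3) x = Some (CoConV z) \<Longrightarrow> x = OutU z"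
  "fup (se_result B \<iota> \<kappa> \<epsilon> \<epsilon>2 \<epsilon>3) x = Some (ConV z) \<Longrightarrow> x = OutL z"
  "flo (se_result B \<iota> \<kappa> \<epsilon> \<epsilon>2 \<epsilon>3) x \<noteq> Some NewW"
  "fup (se_result B \<iota> \<kappa> \<epsilon> \<epsilon>2 \<epsilon>3) x \<noteq> Some NewCW"
  by (cases x; auto simp: se_fup se_flo split: if_splits option.splits)+

text \<open>A walk reverses direction only at an interaction or a cut, and at every new vertex the edges
  on one side are missing (weakening, coweakening) or dangling (above a new cocontraction, below a
  new contraction); so walks pass only through copies of vertices of the original flow.\<close>
lemma se_walk_inner_vertex:
  assumes "traverses (se_result B \<iota> \<kappa> \<epsilon> \<epsilon>2 \<epsilon>3) x a c"
    and "traverses (se_result B \<iota> \<kappa> \<epsilon> \<epsilon>2 \<epsilon>3) y c b"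
    and "may_follow (se_result B \<iota> \<kappa> \<epsilon> \<epsilon>2 \<epsilon>3) c x y"
  shows "\<exists>u. c = TlV u \<or> c = HtV u"
  using assms
  by (cases c; auto simp: traverses_def may_follow_def se_flab se_fup se_flo split: if_splits
      dest: se_new_vertex_edges(1,2) simp: se_new_vertex_edges(3,4))

fun se_junction :: "('v, 'e) se_vertex \<Rightarrow> bool" where
  "se_junction (CoConV _) = True"
| "se_junction (ConV _) = True"
| "se_junction _ = False"

text \<open>The new (co)contraction vertices are sent to \<open>\<iota>\<close> only to make the map total; walks
  never pass through them.\<close>
fun se_vertex_proj :: "'v \<Rightarrow> 'v \<Rightarrow> ('v, 'e) se_vertex \<Rightarrow> 'v" where
  "se_vertex_proj \<iota> \<kappa> (TlV u) = u"
| "se_vertex_proj \<iota> \<kappa> (HtV u) = u"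
| "se_vertex_proj \<iota> \<kappa> NewW = \<iota>"
| "se_vertex_proj \<iota> \<kappa> NewCW = \<kappa>"
| "se_vertex_proj \<iota> \<kappa> (CoConV _) = \<iota>"
| "se_vertex_proj \<iota> \<kappa> (ConV _) = \<iota>"

text \<open>The merged edge \<open>Mid\<close> joins the top of \<open>\<epsilon>3\<close> to the bottom of \<open>\<epsilon>2\<close>; in \<open>B\<close> these are joined
  by the path down \<open>\<epsilon>3\<close> into \<open>\<kappa>\<close>, up \<open>\<epsilon>\<close> into \<open>\<iota>\<close> and down \<open>\<epsilon>2\<close>.\<close>
fun se_traversal_proj :: "'e \<Rightarrow> 'e \<Rightarrow> 'e \<Rightarrow> 'e se_edge \<times> bool \<Rightarrow> ('e \<times> bool) list" where
  "se_traversal_proj \<epsilon> \<epsilon>2 \<epsilon>3 (TlE x, d) = [(x, d)]"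
| "se_traversal_proj \<epsilon> \<epsilon>2 \<epsilon>3 (HtE x, d) = [(x, d)]"
| "se_traversal_proj \<epsilon> \<epsilon>2 \<epsilon>3 (Mid, d) =
     (if d then [(\<epsilon>3, True), (\<epsilon>, False), (\<epsilon>2, True)] else [(\<epsilon>2, False), (\<epsilon>, True), (\<epsilon>3, False)])"
| "se_traversal_proj \<epsilon> \<epsilon>2 \<epsilon>3 (OutU x, d) = []"
| "se_traversal_proj \<epsilon> \<epsilon>2 \<epsilon>3 (OutL x, d) = []"

lemma se_traversal_proj_direction:
  assumes "traverses (se_result B \<iota> \<kappa> \<epsilon> \<epsilon>2 \<epsilon>3) x a b"
  shows "se_traversal_proj \<epsilon> \<epsilon>2 \<epsilon>3 x \<noteq> [] \<and>
         snd (hd (se_traversal_proj \<epsilon> \<epsilon>2 \<epsilon>3 x)) = snd x \<and>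
         snd (last (se_traversal_proj \<epsilon> \<epsilon>2 \<epsilon>3 x)) = snd x"
proof (cases x)
  case (Pair E d)
  then show ?thesis
    using assms by (cases E) (auto simp: traverses_def se_fup se_flo split: if_splits)
qed

lemma se_junction_no_loop:
  assumes "se_junction v"
  shows "\<not> traverses (se_result B \<iota> \<kappa> \<epsilon> \<epsilon>2 \<epsilon>3) x v v"
proof -
  obtain z where "v = CoConV z \<or> v = ConV z"
    using assms by (cases v) auto
  moreover obtain E d where "x = (E, d)"
    by fastforce
  ultimately show ?thesis
    by (cases E) (auto simp: traverses_def se_fup se_flo split: if_splits option.splits)
qed

locale se_redex =
  fixes B :: "('v, 'e) flow" and \<iota> \<kappa> :: 'v and \<epsilon> \<epsilon>2 \<epsilon>3 :: 'e
  assumes interaction: "flab B \<iota> = Interaction" and cut: "flab B \<kappa> = Cut"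
    and simple_edge: "\<epsilon> \<in> fedges B" "fup B \<epsilon> = Some \<iota>" "flo B \<epsilon> = Some \<kappa>"
    and \<epsilon>2: "\<epsilon>2 \<in> fedges B" "\<epsilon>2 \<noteq> \<epsilon>" "fup B \<epsilon>2 = Some \<iota>"
    and \<epsilon>3: "\<epsilon>3 \<in> fedges B" "\<epsilon>3 \<noteq> \<epsilon>" "flo B \<epsilon>3 = Some \<kappa>"
begin

abbreviation "C \<equiv> se_result B \<iota> \<kappa> \<epsilon> \<epsilon>2 \<epsilon>3"
abbreviation "vproj \<equiv> se_vertex_proj \<iota> \<kappa>"
abbreviation "tproj \<equiv> se_traversal_proj \<epsilon> \<epsilon>2 \<epsilon>3"

lemma traverses_proj:
  assumes "traverses C x a b" and "\<not> se_junction a" and "\<not> se_junction b"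
  shows "walk B (vproj a) (vproj b) (tproj x)"
proof (cases x)
  case (Pair E d)
  then show ?thesis
    using assms interaction cut simple_edge \<epsilon>2 \<epsilon>3
    by (cases E; cases d;
        auto simp: traverses_def may_follow_def se_fup se_flo se_fedges split: if_splits option.splits)
qed

lemma may_follow_proj:
  assumes "traverses C x a c" and "traverses C y c b" and "may_follow C c x y"
  shows "may_follow B (vproj c) (last (tproj x)) (hd (tproj y))"
proof (cases "snd x = snd y")
  case True
  then show ?thesis
    using se_traversal_proj_direction[OF assms(1)] se_traversal_proj_direction[OF assms(2)]
    by (simp add: may_follow_def)
next
  case False
  obtain u where u: "c = TlV u \<or> c = HtV u"
    using se_walk_inner_vertex[OF assms] by blast
  obtain E d E' d' where "x = (E, d)" and "y = (E', d')"
    by fastforce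
  with assms False u show ?thesis
    by (cases E; cases E'; cases d; cases d';
        auto simp: traverses_def may_follow_def se_flab se_fup se_flo se_fedges
          split: if_splits option.splits)
qed

lemma walk_proj:
  "walk C a b ws \<Longrightarrow> \<not> se_junction a \<Longrightarrow> \<not> se_junction b \<Longrightarrow>
     walk B (vproj a) (vproj b) (concat (map tproj ws))"
proof (induction ws arbitrary: a)
  case (Cons x ws)
  show ?case
  proof (cases "ws = []")
    case True
    then show ?thesis
      using Cons.prems traverses_proj by simp
  next
    case False
    with Cons.prems obtain c where x: "traverses C x a c" and turn: "may_follow C c x (hd ws)"
      and w: "walk C c b ws"
      by (auto simp: walk_Cons)
    obtain c' where y: "traverses C (hd ws) c c'"
      using w False walk_hd_traverses by (metis list.collapse)
    have "\<not> se_junction c"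
      using se_walk_inner_vertex[OF x y turn] by auto
    then have "walk B (vproj a) (vproj c) (tproj x)"
      and rest: "walk B (vproj c) (vproj b) (concat (map tproj ws))"
      using traverses_proj[OF x] Cons.IH[OF w] Cons.prems by auto
    moreover have "hd (concat (map tproj ws)) = hd (tproj (hd ws))"
      using False se_traversal_proj_direction[OF y] by (cases ws) auto
    moreover have "tproj x \<noteq> []"
      using se_traversal_proj_direction[OF x] by blast
    moreover have "concat (map tproj ws) \<noteq> []"
      using rest by (metis walk.simps(1))
    ultimately have "walk B (vproj a) (vproj b) (tproj x @ concat (map tproj ws))"
      using may_follow_proj[OF x y turn] walk_append_iff by metis
    then show ?thesis
      by simp
  qed
qed simp

text \<open>The two edges at a junction that a walk can use are the tilde and hat copies of one
  edge of \<open>B\<close>, leading to the two copies of one vertex.\<close>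
lemma se_junction_neighbours:
  assumes "traverses C x1 v c1" and "traverses C x2 c2 v" and "se_junction v"
    and "c1 = TlV u1 \<or> c1 = HtV u1" and "c2 = TlV u2 \<or> c2 = HtV u2" and "fst x1 \<noteq> fst x2"
  shows "c1 \<noteq> c2 \<and> vproj c1 = vproj c2"
proof -
  obtain z where "v = CoConV z \<or> v = ConV z"
    using assms(3) by (cases v) auto
  moreover obtain E d E' d' where "x1 = (E, d)" and "x2 = (E', d')"
    by fastforce
  ultimately show ?thesis
    using assms simple_edge \<epsilon>2 \<epsilon>3
    by (cases E; cases E'; cases d; cases d';
        auto simp: traverses_def se_fup se_flo se_fedges split: if_splits option.splits)
qed

lemma closed_walk_at_junction_proj:
  assumes w: "walk C v v ws" and dist: "distinct (map fst ws)" and junction: "se_junction v"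
  shows "\<exists>c ws'. walk B c c ws'"
proof -
  obtain x1 rest where ws: "ws = x1 # rest"
    using w by (cases ws) auto
  have "rest \<noteq> []"
    using w ws se_junction_no_loop[OF junction, of B \<iota> \<kappa> \<epsilon> \<epsilon>2 \<epsilon>3 x1] by auto
  then obtain mid x2 where rest: "rest = mid @ [x2]"
    by (cases rest rule: rev_cases) auto
  have ne: "fst x1 \<noteq> fst x2"
    using dist ws rest by auto
  obtain c1 where t1: "traverses C x1 v c1" and turn1: "may_follow C c1 x1 (hd rest)"
    and w1: "walk C c1 v rest"
    using w ws \<open>rest \<noteq> []\<close> walk_Cons by metis
  obtain c1' where "traverses C (hd rest) c1 c1'"
    using w1 \<open>rest \<noteq> []\<close> walk_hd_traverses by (metis list.collapse)
  then obtain u1 where copy1: "c1 = TlV u1 \<or> c1 = HtV u1"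
    using se_walk_inner_vertex[OF t1 _ turn1] by blast
  show ?thesis
  proof (cases "mid = []")
    case True
    then have "traverses C x2 c1 v"
      using w1 rest by simp
    then show ?thesis
      using se_junction_neighbours[OF t1 _ junction copy1 copy1 ne] by blast
  next
    case False
    then obtain c2 where w2: "walk C c1 c2 mid" and turn2: "may_follow C c2 (last mid) x2"
      and t2: "traverses C x2 c2 v"
      using w1 rest walk_append_iff[OF False, of "[x2]" C c1 v] by auto
    obtain c2' where "traverses C (last mid) c2' c2"
      using walk_last_traverses[OF w2] by blast
    then obtain u2 where copy2: "c2 = TlV u2 \<or> c2 = HtV u2"
      using se_walk_inner_vertex[OF _ t2 turn2] by blast
    have "vproj c1 = vproj c2"
      using se_junction_neighbours[OF t1 t2 junction copy1 copy2 ne] by blast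
    moreover have "walk B (vproj c1) (vproj c2) (concat (map tproj mid))"
      using walk_proj[OF w2] copy1 copy2 by auto
    ultimately show ?thesis
      by metis
  qed
qed

lemma closed_walk_proj:
  assumes "walk C v v ws" and "distinct (map fst ws)"
  shows "\<exists>c ws'. walk B c c ws'"
proof (cases "se_junction v")
  case True
  then show ?thesis
    using closed_walk_at_junction_proj assms by blast
next
  case False
  then show ?thesis
    using walk_proj[OF assms(1)] by blast
qed

end

theorem proposition5p2:
  fixes B :: "('v, 'e) flow" and C :: "(('v, 'e) se_vertex, 'e se_edge) flow"
  assumes "atomic_flow B" and "cycle_free B" and "se_step B C"
  shows "cycle_free C"
proof -
  obtain \<iota> \<kappa> \<epsilon> \<epsilon>2 \<epsilon>3 where "se_redex B \<iota> \<kappa> \<epsilon> \<epsilon>2 \<epsilon>3" and C: "C = se_result B \<iota> \<kappa> \<epsilon> \<epsilon>2 \<epsilon>3"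
    using assms(3) unfolding se_step_def se_redex_def by blast
  have no_closed_walk: "\<not> walk B c c ws" for c ws
    using cycle_free_no_closed_walk[OF atomic_flow_edges_attached assms(2)] assms(1) by metis
  show ?thesis
    unfolding cycle_free_def
  proof clarify
    fix v es
    assume "ai_path C v v es" and "distinct es"
    then obtain ws where "walk C v v ws" and "distinct (map fst ws)"
      using ai_path_imp_walk by metis
    then show False
      using se_redex.closed_walk_proj[OF \<open>se_redex B \<iota> \<kappa> \<epsilon> \<epsilon>2 \<epsilon>3\<close>] C no_closed_walk by metis
  qed
qed

end
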